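(* In the relatively free algebra $R=\mathbb{K}\langle Y\cup Z\rangle/I$, the image of every polynomial $f(z_1,\dots,z_n)$ in the odd variables only is a linear combination of the images of the polynomials $(z_{i_1}\circ z_{i_2})\cdots(z_{i_{2k-1}}\circ z_{i_{2k}})\,z_{j_1}\cdots z_{j_l}$, with $k,l\ge0$, $i_1\le i_2\le\dots\le i_{2k}$ and $j_1\le j_2\le\dots\le j_l$.
   Context: $\mathbb{K}$ is an infinite field of characteristic different from $2$. $\mathbb{K}\langle Y\cup Z\rangle$ is the free associative algebra on disjoint countable sets $Y=\{y_1,y_2,\dots\}$ (degree $0$) and $Z=\{z_1,z_2,\dots\}$ (degree $1$). Notation: $[a,b]=ab-ba$, $[a_1,\dots,a_n]=[[a_1,\dots,a_{n-1}],a_n]$, $a\circ b=ab+ba$. A $T_2$-ideal is an ideal of $\mathbb{K}\langle Y\cup Z\rangle$ stable under all graded endomorphisms (those sending each $y_i$ to a polynomial of degree $0$ and each $z_i$ to one of degree $1$). $I$ is the $T_2$-ideal generated by: (1) $[y_1,y_2,y_3]$, $[y_1,y_2,z_3]$; (2) $[y_1,z_2,y_3]$; (3) $[y_1,z_2]\circ z_3$; (4) $[z_1\circ z_2,z_3]$; (5) $(z_1\circ z_2)(z_3\circ z_4)-(z_1\circ z_3)(z_2\circ z_4)$; (6) $[x_1,y_2][y_3,x_4]+[x_1,y_3][y_2,x_4]$ for all choices $x_1\in\{y_1,z_1\}$, $x_4\in\{y_4,z_4\}$; (7) $[y_1,z_2](z_3\circ z_4)-[y_1,z_3](z_2\circ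 z_4)$. *)

theory Defs
  imports Main
begin

text \<open>Variables: Y i are the even (degree 0) variables y_i, Z i the odd (degree 1) variables z_i.\<close>
datatype var = Y nat | Z nat

type_synonym 'k fpoly = "var list \<Rightarrow> 'k"

definition FA :: "('k::field) fpoly set" where
  "FA = {f. finite {w. f w \<noteq> 0}}"

definition pzero :: "('k::field) fpoly" where "pzero = (\<lambda>w. 0)"
definition pone :: "('k::field) fpoly" where "pone = (\<lambda>w. if w = [] then 1 else 0)"
definition pvar :: "var \<Rightarrow> ('k::field) fpoly" where "pvar x = (\<lambda>w. if w = [x] then 1 else 0)"
definition padd :: "('k::field) fpoly \<Rightarrow> 'k fpoly \<Rightarrow> 'k fpoly" where "padd f g = (\<lambda>w. f w + g w)"
definition psub :: "('k::field) fpoly \<Rightarrow> 'k fpoly \<Rightarrow> 'k fpoly" where "psub f g = (\<lambda>w. f w - g w)"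
definition smult :: "'k \<Rightarrow> ('k::field) fpoly \<Rightarrow> 'k fpoly" where "smult c f = (\<lambda>w. c * f w)"
definition pmult :: "('k::field) fpoly \<Rightarrow> 'k fpoly \<Rightarrow> 'k fpoly" where
  "pmult f g = (\<lambda>w. \<Sum>i\<le>length w. f (take i w) * g (drop i w))"

definition yv :: "nat \<Rightarrow> ('k::field) fpoly" where "yv i = pvar (Y i)"
definition zv :: "nat \<Rightarrow> ('k::field) fpoly" where "zv i = pvar (Z i)"

definition comm :: "('k::field) fpoly \<Rightarrow> 'k fpoly \<Rightarrow> 'k fpoly" where
  "comm a b = psub (pmult a b) (pmult b a)"
definition comm3 :: "('k::field) fpoly \<Rightarrow> 'k fpoly \<Rightarrow> 'k fpoly \<Rightarrow> 'k fpoly" where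
  "comm3 a b c = comm (comm a b) c"
definition jord :: "('k::field) fpoly \<Rightarrow> 'k fpoly \<Rightarrow> 'k fpoly" where
  "jord a b = padd (pmult a b) (pmult b a)"

definition prodl :: "('k::field) fpoly list \<Rightarrow> 'k fpoly" where
  "prodl ps = foldr pmult ps pone"

fun isZ :: "var \<Rightarrow> bool" where "isZ (Z _) = True" | "isZ (Y _) = False"

definition zdeg :: "var list \<Rightarrow> nat" where "zdeg w = length (filter isZ w)"

text \<open>Homogeneous of degree 0 / degree 1 (the zero polynomial is of both degrees).\<close>
definition hom0 :: "('k::field) fpoly \<Rightarrow> bool" where
  "hom0 f \<longleftrightarrow> f \<in> FA \<and> (\<forall>w. f w \<noteq> 0 \<longrightarrow> even (zdeg w))"
definition hom1 :: "('k::field) fpoly \<Rightarrow> bool" where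
  "hom1 f \<longleftrightarrow> f \<in> FA \<and> (\<forall>w. f w \<noteq> 0 \<longrightarrow> odd (zdeg w))"

definition graded_subst :: "(var \<Rightarrow> ('k::field) fpoly) \<Rightarrow> bool" where
  "graded_subst \<phi> \<longleftrightarrow> (\<forall>i. hom0 (\<phi> (Y i)) \<and> hom1 (\<phi> (Z i)))"

text \<open>The algebra endomorphism determined by the images of the variables.\<close>
definition wordprod :: "(var \<Rightarrow> ('k::field) fpoly) \<Rightarrow> var list \<Rightarrow> 'k fpoly" where
  "wordprod \<phi> w = prodl (map \<phi> w)"
definition psubst :: "(var \<Rightarrow> ('k::field) fpoly) \<Rightarrow> 'k fpoly \<Rightarrow> 'k fpoly" where
  "psubst \<phi> f = (\<lambda>u. \<Sum>w\<in>{w. f w \<noteq> 0}. f w * wordprod \<phi> w u)"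

definition is_ideal :: "('k::field) fpoly set \<Rightarrow> bool" where
  "is_ideal J \<longleftrightarrow> J \<subseteq> FA \<and> pzero \<in> J
     \<and> (\<forall>f\<in>J. \<forall>g\<in>J. padd f g \<in> J)
     \<and> (\<forall>c. \<forall>f\<in>J. smult c f \<in> J)
     \<and> (\<forall>f\<in>J. \<forall>h\<in>FA. pmult h f \<in> J \<and> pmult f h \<in> J)"

definition is_T2_ideal :: "('k::field) fpoly set \<Rightarrow> bool" where
  "is_T2_ideal J \<longleftrightarrow> is_ideal J \<and> (\<forall>\<phi>. graded_subst \<phi> \<longrightarrow> (\<forall>f\<in>J. psubst \<phi> f \<in> J))"

definition T2_gen :: "('k::field) fpoly set \<Rightarrow> 'k fpoly set" where
  "T2_gen S = \<Inter> {J. is_T2_ideal J \<and> S \<subseteq> J}"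

definition Igens :: "('k::field) fpoly set" where
  "Igens = {comm3 (yv 1) (yv 2) (yv 3), comm3 (yv 1) (yv 2) (zv 3),
            comm3 (yv 1) (zv 2) (yv 3),
            jord (comm (yv 1) (zv 2)) (zv 3),
            comm (jord (zv 1) (zv 2)) (zv 3),
            psub (pmult (jord (zv 1) (zv 2)) (jord (zv 3) (zv 4)))
                 (pmult (jord (zv 1) (zv 3)) (jord (zv 2) (zv 4))),
            psub (pmult (comm (yv 1) (zv 2)) (jord (zv 3) (zv 4)))
                 (pmult (comm (yv 1) (zv 3)) (jord (zv 2) (zv 4)))}
   \<union> {padd (pmult (comm x1 (yv 2)) (comm (yv 3) x4)) (pmult (comm x1 (yv 3)) (comm (yv 2) x4))
       | x1 x4. x1 \<in> {yv 1, zv 1} \<and> x4 \<in> {yv 4, zv 4}}"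

definition Iideal :: "('k::field) fpoly set" where
  "Iideal = T2_gen Igens"

text \<open>(z_{i1} o z_{i2}) ... (z_{i(2k-1)} o z_{i(2k)}) z_{j1} ... z_{jl}, with the pair list
  ps = [(i1,i2),...,(i(2k-1),i(2k))] and js = [j1,...,jl], indices in {1..n}, both sorted.\<close>
definition std_poly :: "(nat \<times> nat) list \<Rightarrow> nat list \<Rightarrow> ('k::field) fpoly" where
  "std_poly ps js = pmult (prodl (map (\<lambda>(a,b). jord (zv a) (zv b)) ps)) (prodl (map zv js))"

definition StdSet :: "nat \<Rightarrow> ('k::field) fpoly set" where
  "StdSet n = {std_poly ps js | ps js.
      sorted (concat (map (\<lambda>(a,b). [a,b]) ps)) \<and> sorted js
      \<and> set (concat (map (\<lambda>(a,b). [a,b]) ps)) \<subseteq> {1..n} \<and> set js \<subseteq> {1..n}}"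

inductive_set lin_span :: "('k::field) fpoly set \<Rightarrow> 'k fpoly set" for S where
  zero: "pzero \<in> lin_span S"
| step: "p \<in> S \<Longrightarrow> q \<in> lin_span S \<Longrightarrow> padd (smult c p) q \<in> lin_span S"

end

theory Submission
  imports Defs "HOL-Library.Function_Algebras" "HOL-Library.Multiset"
begin

(*
  Only two kinds of generators of I are needed:
  (4) every Jordan square z_a o z_b commutes with every odd variable z_c, hence with every
      word in odd variables;
  (5) in a product of two Jordan squares the middle indices may be exchanged, so a product of
      squares depends only on the multiset of its indices and can be sorted.
  A word z_j1...z_jl is then brought into sorted order by adjacent transpositions: the identity
  z_a z_b = (z_a o z_b) - z_b z_a together with (4) moves the square z_a o z_b to the front and
  leaves a word that is two letters shorter, which is handled by induction on the length.
*)

lemma sum_apply_fun: "(\<Sum>i\<in>A. F i) x = (\<Sum>i\<in>A. F i x)"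
  by (induction A rule: infinite_finite_induct) auto

definition mon :: "var list \<Rightarrow> ('k::field) fpoly" where
  "mon w = (\<lambda>u. if u = w then 1 else 0)"

lemma padd_eq: "padd f g = f + g" by (simp add: padd_def fun_eq_iff)
lemma psub_eq: "psub f g = f - g" by (simp add: psub_def fun_eq_iff)
lemma pzero_eq: "pzero = 0" by (simp add: pzero_def fun_eq_iff)
lemma pone_eq: "pone = mon []" by (simp add: pone_def mon_def)
lemma pvar_eq: "pvar x = mon [x]" by (simp add: pvar_def mon_def)

definition splits :: "var list \<Rightarrow> (var list \<times> var list) set" where
  "splits w = {(u,v). u @ v = w}"

lemma splits_image: "splits w = (\<lambda>i. (take i w, drop i w)) ` {..length w}"
proof -
  have "(u,v) \<in> (\<lambda>i. (take i w, drop i w)) ` {..length w}" if "u @ v = w" for u v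
    using that by (intro image_eqI[of _ _ "length u"]) auto
  then show ?thesis by (auto simp: splits_def)
qed

lemma finite_splits[simp]: "finite (splits w)"
  by (simp add: splits_image)

lemma pmult_alt: "pmult f g w = (\<Sum>(u,v)\<in>splits w. f u * g v)"
proof -
  have inj: "inj_on (\<lambda>i. (take i w, drop i w)) {..length w}"
    by (rule inj_onI) (metis atMost_iff length_take min.absorb2 prod.inject)
  show ?thesis
    unfolding pmult_def splits_image sum.reindex[OF inj] by (simp add: comp_def)
qed

lemma pmult_add_left: "pmult (f + g) h = pmult f h + pmult g h"
  by (simp add: pmult_def fun_eq_iff distrib_right sum.distrib)
lemma pmult_add_right: "pmult h (f + g) = pmult h f + pmult h g"
  by (simp add: pmult_def fun_eq_iff distrib_left sum.distrib)
lemma pmult_diff_left: "pmult (f - g) h = pmult f h - pmult g h"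
  by (simp add: pmult_def fun_eq_iff left_diff_distrib sum_subtractf)
lemma pmult_diff_right: "pmult h (f - g) = pmult h f - pmult h g"
  by (simp add: pmult_def fun_eq_iff right_diff_distrib sum_subtractf)
lemma pmult_smult_left: "pmult (smult c f) h = smult c (pmult f h)"
  by (simp add: pmult_def smult_def fun_eq_iff sum_distrib_left mult.assoc)
lemma pmult_smult_right: "pmult h (smult c f) = smult c (pmult h f)"
  by (simp add: pmult_def smult_def fun_eq_iff sum_distrib_left mult.assoc mult.left_commute)
lemma pmult_sum_left: "pmult (\<Sum>i\<in>I. F i) h = (\<Sum>i\<in>I. pmult (F i) h)"
  by (simp add: pmult_def fun_eq_iff sum_apply_fun sum_distrib_right sum.swap[where A=I])
lemma pmult_sum_right: "pmult h (\<Sum>i\<in>I. F i) = (\<Sum>i\<in>I. pmult h (F i))"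
  by (simp add: pmult_def fun_eq_iff sum_apply_fun sum_distrib_left sum.swap[where A=I])

lemma pmult_mon: "pmult (mon a) (mon b) = mon (a @ b)"
proof (rule ext)
  fix w
  have "pmult (mon a) (mon b) w = (\<Sum>x\<in>splits w. if x = (a,b) then 1 else 0)"
    unfolding pmult_alt by (rule sum.cong) (auto simp: mon_def split: if_splits)
  also have "\<dots> = mon (a @ b) w"
    by (subst sum.delta[OF finite_splits]) (auto simp: splits_def mon_def)
  finally show "pmult (mon a) (mon b) w = mon (a @ b) w" .
qed

lemma pmult_one_left[simp]: "pmult pone f = f"
proof (rule ext)
  fix w
  have "pmult pone f w = (\<Sum>x\<in>splits w. if x = ([],w) then f w else 0)"
    unfolding pmult_alt by (rule sum.cong) (auto simp: pone_def splits_def split: if_splits)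
  also have "\<dots> = f w" by (subst sum.delta[OF finite_splits]) (auto simp: splits_def)
  finally show "pmult pone f w = f w" .
qed

lemma pmult_one_right[simp]: "pmult f pone = f"
proof (rule ext)
  fix w
  have "pmult f pone w = (\<Sum>x\<in>splits w. if x = (w,[]) then f w else 0)"
    unfolding pmult_alt by (rule sum.cong) (auto simp: pone_def splits_def split: if_splits)
  also have "\<dots> = f w" by (subst sum.delta[OF finite_splits]) (auto simp: splits_def)
  finally show "pmult f pone w = f w" .
qed

text \<open>Associativity: both bracketings sum over the factorisations of a word into three parts.\<close>

definition splits3 :: "var list \<Rightarrow> (var list \<times> var list \<times> var list) set" where
  "splits3 w = {(s,t,v). s @ t @ v = w}"

lemma pmult_assoc: "pmult (pmult f g) h = pmult f (pmult g h)"
proof (rule ext)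
  fix w
  have left: "pmult (pmult f g) h w = (\<Sum>(s,t,v)\<in>splits3 w. f s * g t * h v)"
  proof -
    have "pmult (pmult f g) h w = (\<Sum>x\<in>splits w. \<Sum>y\<in>splits (fst x). f (fst y) * g (snd y) * h (snd x))"
      unfolding pmult_alt by (simp add: split_def sum_distrib_right)
    also have "\<dots> = (\<Sum>(x,y)\<in>Sigma (splits w) (\<lambda>x. splits (fst x)). f (fst y) * g (snd y) * h (snd x))"
      by (rule sum.Sigma) auto
    also have "\<dots> = (\<Sum>(s,t,v)\<in>splits3 w. f s * g t * h v)"
      by (rule sum.reindex_bij_witness[where i="\<lambda>(s,t,v). ((s@t,v),(s,t))" and j="\<lambda>((x,v),(s,t)). (s,t,v)"])
         (auto simp: splits_def splits3_def)
    finally show ?thesis .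
  qed
  have right: "pmult f (pmult g h) w = (\<Sum>(s,t,v)\<in>splits3 w. f s * g t * h v)"
  proof -
    have "pmult f (pmult g h) w = (\<Sum>x\<in>splits w. \<Sum>y\<in>splits (snd x). f (fst x) * g (fst y) * h (snd y))"
      unfolding pmult_alt by (simp add: split_def sum_distrib_left mult.assoc)
    also have "\<dots> = (\<Sum>(x,y)\<in>Sigma (splits w) (\<lambda>x. splits (snd x)). f (fst x) * g (fst y) * h (snd y))"
      by (rule sum.Sigma) auto
    also have "\<dots> = (\<Sum>(s,t,v)\<in>splits3 w. f s * g t * h v)"
      by (rule sum.reindex_bij_witness[where i="\<lambda>(s,t,v). ((s,t@v),(t,v))" and j="\<lambda>((s,y),(t,v)). (s,t,v)"])
         (auto simp: splits_def splits3_def)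
    finally show ?thesis .
  qed
  show "pmult (pmult f g) h w = pmult f (pmult g h) w" using left right by simp
qed

lemma smult_apply: "smult c f w = c * f w" by (simp add: smult_def)
lemma smult_add_left: "smult (a + b) f = smult a f + smult b f"
  by (simp add: smult_def fun_eq_iff distrib_right)
lemma smult_diff_left: "smult (a - b) f = smult a f - smult b f"
  by (simp add: smult_def fun_eq_iff left_diff_distrib)
lemma smult_diff_right: "smult a (f - g) = smult a f - smult a g"
  by (simp add: smult_def fun_eq_iff right_diff_distrib)
lemma smult_smult: "smult a (smult b f) = smult (a * b) f"
  by (simp add: smult_def fun_eq_iff)
lemma smult_sum: "smult a (\<Sum>i\<in>I. F i) = (\<Sum>i\<in>I. smult a (F i))"
  by (simp add: smult_def fun_eq_iff sum_apply_fun sum_distrib_left)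
lemma smult_minus_one: "smult (-1) f = - f"
  by (simp add: smult_def fun_eq_iff)

lemma fa_zero[simp]: "0 \<in> FA" by (simp add: FA_def)
lemma fa_mon[simp]: "mon w \<in> FA"
proof -
  have "{u. mon w u \<noteq> (0::'a::field)} \<subseteq> {w}" by (auto simp: mon_def)
  then show ?thesis unfolding FA_def by (auto intro: finite_subset)
qed
lemma fa_add[simp]: "f \<in> FA \<Longrightarrow> g \<in> FA \<Longrightarrow> f + g \<in> FA"
  unfolding FA_def by (auto intro: finite_subset[of _ "{w. f w \<noteq> 0} \<union> {w. g w \<noteq> 0}"])
lemma fa_diff[simp]: "f \<in> FA \<Longrightarrow> g \<in> FA \<Longrightarrow> f - g \<in> FA"
  unfolding FA_def by (auto intro: finite_subset[of _ "{w. f w \<noteq> 0} \<union> {w. g w \<noteq> 0}"])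
lemma fa_smult[simp]: "f \<in> FA \<Longrightarrow> smult c f \<in> FA"
  unfolding FA_def smult_def by (auto intro: finite_subset[of _ "{w. f w \<noteq> 0}"])
lemma fa_sum[simp]: "(\<And>i. i \<in> I \<Longrightarrow> F i \<in> FA) \<Longrightarrow> (\<Sum>i\<in>I. F i) \<in> FA"
  by (induction I rule: infinite_finite_induct) auto
lemma fa_pmult[simp]:
  assumes f: "f \<in> FA" and g: "g \<in> FA" shows "pmult f g \<in> FA"
proof -
  have "{w. pmult f g w \<noteq> 0} \<subseteq> (\<lambda>(u,v). u @ v) ` ({u. f u \<noteq> 0} \<times> {v. g v \<noteq> 0})"
  proof
    fix w assume "w \<in> {w. pmult f g w \<noteq> 0}"
    then have "(\<Sum>(u,v)\<in>splits w. f u * g v) \<noteq> 0" by (simp add: pmult_alt)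
    then obtain p where "p \<in> splits w" "(case p of (u,v) \<Rightarrow> f u * g v) \<noteq> 0"
      by (meson sum.not_neutral_contains_not_neutral)
    then show "w \<in> (\<lambda>(u,v). u @ v) ` ({u. f u \<noteq> 0} \<times> {v. g v \<noteq> 0})"
      by (auto simp: splits_def split: prod.splits)
  qed
  then show ?thesis using f g unfolding FA_def by (auto intro: finite_subset)
qed
lemma fa_pone[simp]: "pone \<in> FA" by (simp add: pone_eq)
lemma fa_zv[simp]: "zv i \<in> FA" by (simp add: zv_def pvar_eq)
lemma fa_yv[simp]: "yv i \<in> FA" by (simp add: yv_def pvar_eq)
lemma fa_prodl[simp]: "(\<And>p. p \<in> set ps \<Longrightarrow> p \<in> FA) \<Longrightarrow> prodl ps \<in> FA"
  by (induction ps) (auto simp: prodl_def)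
lemma fa_jord[simp]: "f \<in> FA \<Longrightarrow> g \<in> FA \<Longrightarrow> jord f g \<in> FA"
  by (simp add: jord_def padd_eq)
lemma fa_comm[simp]: "f \<in> FA \<Longrightarrow> g \<in> FA \<Longrightarrow> comm f g \<in> FA"
  by (simp add: comm_def psub_eq)

lemma fa_repr: "f \<in> FA \<Longrightarrow> f = (\<Sum>w\<in>{w. f w \<noteq> 0}. smult (f w) (mon w))"
proof (rule ext)
  fix u assume f: "f \<in> FA"
  have "(\<Sum>w\<in>{w. f w \<noteq> 0}. smult (f w) (mon w)) u = (\<Sum>w\<in>{w. f w \<noteq> 0}. if u = w then f w else 0)"
    by (simp add: sum_apply_fun smult_def mon_def if_distrib cong: if_cong)
  also have "\<dots> = f u" using f by (subst sum.delta') (auto simp: FA_def)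
  finally show "f u = (\<Sum>w\<in>{w. f w \<noteq> 0}. smult (f w) (mon w)) u" by simp
qed

section \<open>Substitutions are algebra homomorphisms\<close>

lemma prodl_append: "prodl (xs @ ys) = pmult (prodl xs) (prodl ys)"
  by (induction xs) (auto simp: prodl_def pmult_assoc)

lemma wordprod_append: "wordprod \<phi> (a @ b) = pmult (wordprod \<phi> a) (wordprod \<phi> b)"
  by (simp add: wordprod_def prodl_append)

lemma psubst_eq:
  "finite S \<Longrightarrow> {w. f w \<noteq> 0} \<subseteq> S \<Longrightarrow> psubst \<phi> f = (\<Sum>w\<in>S. smult (f w) (wordprod \<phi> w))"
  unfolding psubst_def
  by (rule ext, simp add: sum_apply_fun smult_def, rule sum.mono_neutral_left) auto

lemma psubst_add:
  assumes "f \<in> FA" "g \<in> FA" shows "psubst \<phi> (f + g) = psubst \<phi> f + psubst \<phi> g"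
proof -
  have fin: "finite ({w. f w \<noteq> 0} \<union> {w. g w \<noteq> 0})" using assms by (simp add: FA_def)
  show ?thesis
    by (subst (1 2 3) psubst_eq[OF fin]) (auto simp: smult_add_left sum.distrib)
qed

lemma psubst_diff:
  assumes "f \<in> FA" "g \<in> FA" shows "psubst \<phi> (f - g) = psubst \<phi> f - psubst \<phi> g"
proof -
  have fin: "finite ({w. f w \<noteq> 0} \<union> {w. g w \<noteq> 0})" using assms by (simp add: FA_def)
  show ?thesis
    by (subst (1 2 3) psubst_eq[OF fin]) (auto simp: smult_diff_left sum_subtractf)
qed

lemma psubst_smult: assumes "f \<in> FA" shows "psubst \<phi> (smult c f) = smult c (psubst \<phi> f)"
proof -
  have fin: "finite {w. f w \<noteq> 0}" using assms by (simp add: FA_def)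
  show ?thesis
    by (subst (1 2) psubst_eq[OF fin]) (auto simp: smult_apply smult_sum smult_smult)
qed

lemma psubst_mon: "psubst \<phi> (mon w) = wordprod \<phi> w"
  by (subst psubst_eq[of "{w}"]) (auto simp: mon_def smult_def split: if_splits)

lemma psubst_zero[simp]: "psubst \<phi> 0 = 0"
  by (simp add: psubst_def fun_eq_iff)

lemma psubst_sum:
  "(\<And>i. i \<in> I \<Longrightarrow> F i \<in> FA) \<Longrightarrow> psubst \<phi> (\<Sum>i\<in>I. F i) = (\<Sum>i\<in>I. psubst \<phi> (F i))"
  by (induction I rule: infinite_finite_induct) (auto simp: psubst_add)

text \<open>Multiplicativity: expand both factors in monomials and use that the images of
  monomials multiply like words.\<close>

lemma psubst_pmult:
  assumes f: "f \<in> FA" and g: "g \<in> FA"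
  shows "psubst \<phi> (pmult f g) = pmult (psubst \<phi> f) (psubst \<phi> g)"
proof -
  let ?A = "{w. f w \<noteq> 0}" and ?B = "{w. g w \<noteq> 0}"
  have fA: "finite ?A" and fB: "finite ?B" using f g by (auto simp: FA_def)
  have expand: "pmult (\<Sum>a\<in>?A. smult (f a) (P a)) (\<Sum>b\<in>?B. smult (g b) (P b))
      = (\<Sum>a\<in>?A. \<Sum>b\<in>?B. smult (f a * g b) (pmult (P a) (P b)))" for P :: "var list \<Rightarrow> 'a fpoly"
    by (simp add: pmult_sum_left pmult_sum_right pmult_smult_left pmult_smult_right
        smult_smult smult_sum) (subst sum.swap, simp add: mult.commute)
  have "pmult f g = (\<Sum>a\<in>?A. \<Sum>b\<in>?B. smult (f a * g b) (mon (a @ b)))"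
    using expand[of mon] by (simp add: fa_repr[OF f, symmetric] fa_repr[OF g, symmetric] pmult_mon)
  then have "psubst \<phi> (pmult f g) = (\<Sum>a\<in>?A. \<Sum>b\<in>?B. smult (f a * g b) (wordprod \<phi> (a @ b)))"
    by (simp add: psubst_sum psubst_smult psubst_mon)
  also have "\<dots> = pmult (psubst \<phi> f) (psubst \<phi> g)"
    using expand[of "wordprod \<phi>"] by (simp add: psubst_eq[OF fA] psubst_eq[OF fB] wordprod_append)
  finally show ?thesis .
qed

lemma psubst_pvar: "psubst \<phi> (pvar x) = \<phi> x"
  by (simp add: pvar_eq psubst_mon wordprod_def prodl_def pone_eq[symmetric])

lemma psubst_jord: "f \<in> FA \<Longrightarrow> g \<in> FA \<Longrightarrow> psubst \<phi> (jord f g) = jord (psubst \<phi> f) (psubst \<phi> g)"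
  by (simp add: jord_def padd_eq psubst_add psubst_pmult)

lemma psubst_comm: "f \<in> FA \<Longrightarrow> g \<in> FA \<Longrightarrow> psubst \<phi> (comm f g) = comm (psubst \<phi> f) (psubst \<phi> g)"
  by (simp add: comm_def psub_eq psubst_diff psubst_pmult)

lemma fa_psubst:
  assumes "\<And>x. \<phi> x \<in> FA" and "f \<in> FA" shows "psubst \<phi> f \<in> FA"
proof -
  have fin: "finite {w. f w \<noteq> 0}" using assms(2) by (simp add: FA_def)
  have "wordprod \<phi> w \<in> FA" for w unfolding wordprod_def by (rule fa_prodl) (use assms(1) in auto)
  then show ?thesis by (simp add: psubst_eq[OF fin])
qed

definition zren :: "(nat \<Rightarrow> nat) \<Rightarrow> var \<Rightarrow> ('k::field) fpoly" where
  "zren \<sigma> v = (case v of Y i \<Rightarrow> yv i | Z i \<Rightarrow> zv (\<sigma> i))"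

lemma graded_zren: "graded_subst (zren \<sigma>)"
proof -
  have h0: "hom0 (yv i :: 'k::field fpoly)" for i
    unfolding hom0_def using fa_yv[of i] by (auto simp: yv_def pvar_def zdeg_def split: if_splits)
  have h1: "hom1 (zv i :: 'k::field fpoly)" for i
    unfolding hom1_def using fa_zv[of i] by (auto simp: zv_def pvar_def zdeg_def split: if_splits)
  show ?thesis by (simp add: graded_subst_def zren_def h0 h1)
qed

lemma psubst_zren_zv: "psubst (zren \<sigma>) (zv i) = zv (\<sigma> i)"
  by (simp add: zv_def psubst_pvar zren_def)

text \<open>The whole algebra is a T2-ideal: graded substitutions send variables to finitely
  supported polynomials.\<close>

lemma T2_ideal_FA: "is_T2_ideal (FA :: ('k::field) fpoly set)"
proof -
  have "psubst \<phi> f \<in> FA" if "graded_subst \<phi>" "f \<in> FA" for \<phi> and f :: "'k fpoly"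
  proof (rule fa_psubst[OF _ that(2)])
    show "\<phi> x \<in> FA" for x
      using that(1) by (cases x) (auto simp: graded_subst_def hom0_def hom1_def)
  qed
  then show ?thesis
    by (auto simp: is_T2_ideal_def is_ideal_def padd_eq pzero_eq)
qed

text \<open>Hence the intersection defining \<open>T2_gen\<close> is over a nonempty family, and the
  T2-ideal generated by a set of polynomials is indeed a T2-ideal containing it.\<close>

lemma T2_gen_T2_ideal:
  assumes "S \<subseteq> FA" shows "is_T2_ideal (T2_gen S)" and "S \<subseteq> T2_gen S"
proof -
  have "T2_gen S \<subseteq> FA" using T2_ideal_FA assms by (auto simp: T2_gen_def)
  then show "is_T2_ideal (T2_gen S)"
    unfolding T2_gen_def is_T2_ideal_def is_ideal_def by (auto simp: T2_gen_def)
  show "S \<subseteq> T2_gen S" by (auto simp: T2_gen_def)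
qed

lemma span_in: "p \<in> S \<Longrightarrow> p \<in> lin_span S"
  using lin_span.step[of p S pzero 1] lin_span.zero[of S]
  by (simp add: padd_eq pzero_eq smult_def)

lemma span_zero: "0 \<in> lin_span S"
  using lin_span.zero by (simp add: pzero_eq[symmetric])

lemma span_add: "p \<in> lin_span S \<Longrightarrow> q \<in> lin_span S \<Longrightarrow> p + q \<in> lin_span S"
proof (induction p rule: lin_span.induct)
  case zero then show ?case by (simp add: pzero_eq)
next
  case (step p q' c)
  have "smult c p + (q' + q) \<in> lin_span S"
    using lin_span.step[OF step.hyps(1) step.IH[OF step.prems]] by (simp only: padd_eq)
  then show "padd (smult c p) q' + q \<in> lin_span S" by (simp only: padd_eq add.assoc)
qed

lemma span_smult: "p \<in> lin_span S \<Longrightarrow> smult c p \<in> lin_span S"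
proof (induction p rule: lin_span.induct)
  case zero then show ?case using lin_span.zero by (simp add: pzero_def smult_def)
next
  case (step p q d)
  have "smult c (padd (smult d p) q) = padd (smult (c * d) p) (smult c q)"
    by (simp add: padd_def smult_def fun_eq_iff distrib_left mult.assoc)
  then show ?case using lin_span.step[OF step.hyps(1) step.IH] by simp
qed

section \<open>Sorting by adjacent transpositions\<close>

text \<open>If a reflexive and transitive relation relates every rearrangement of \<open>xs\<close> to the
  rearrangement obtained by swapping two adjacent entries, then it relates \<open>xs\<close> to its sorted
  version: insertion sort only performs such swaps.  The prefix \<open>u\<close> is the part already passed.\<close>

context
  fixes R :: "'a::linorder list \<Rightarrow> 'a list \<Rightarrow> bool" and xs :: "'a list"
  assumes refl: "\<And>x. R x x" and trans: "\<And>x y z. R x y \<Longrightarrow> R y z \<Longrightarrow> R x z"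
    and swap: "\<And>u a b v. mset (u @ a # b # v) = mset xs \<Longrightarrow> R (u @ a # b # v) (u @ b # a # v)"
begin

lemma insort_by_adjacent_swaps: "mset (u @ x # l) = mset xs \<Longrightarrow> R (u @ x # l) (u @ insort x l)"
proof (induction l arbitrary: u)
  case Nil then show ?case by (simp add: refl)
next
  case (Cons y l)
  show ?case
  proof (cases "x \<le> y")
    case True then show ?thesis by (simp add: refl)
  next
    case False
    have "R (u @ x # y # l) (u @ y # x # l)" by (rule swap) (use Cons.prems in simp)
    moreover have "R ((u @ [y]) @ x # l) ((u @ [y]) @ insort x l)"
      using Cons.IH[of "u @ [y]"] Cons.prems by (simp add: add_mset_commute)
    ultimately show ?thesis using False trans by auto
  qed
qed

lemma sort_by_adjacent_swaps_prefix: "mset (u @ ys) = mset xs \<Longrightarrow> R (u @ ys) (u @ sort ys)"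
proof (induction ys arbitrary: u)
  case Nil then show ?case by (simp add: refl)
next
  case (Cons x ys)
  have "R ((u @ [x]) @ ys) ((u @ [x]) @ sort ys)" using Cons.IH[of "u @ [x]"] Cons.prems by simp
  moreover have "R (u @ x # sort ys) (u @ insort x (sort ys))"
    using insort_by_adjacent_swaps[of u x "sort ys"] Cons.prems by simp
  ultimately show ?case using trans by simp
qed

lemma sort_by_adjacent_swaps: "R xs (sort xs)"
  using sort_by_adjacent_swaps_prefix[of "[]" xs] by simp

end

definition PP :: "(nat \<times> nat) list \<Rightarrow> ('k::field) fpoly" where
  "PP ps = prodl (map (\<lambda>(a,b). jord (zv a) (zv b)) ps)"
definition ZZ :: "nat list \<Rightarrow> ('k::field) fpoly" where
  "ZZ js = prodl (map zv js)"

lemma fa_PP[simp]: "PP ps \<in> FA" unfolding PP_def by (rule fa_prodl) auto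
lemma fa_ZZ[simp]: "ZZ js \<in> FA" unfolding ZZ_def by (rule fa_prodl) auto

lemma PP_Nil[simp]: "PP [] = pone" by (simp add: PP_def prodl_def)
lemma PP_Cons: "PP ((a,b) # ps) = pmult (jord (zv a) (zv b)) (PP ps)" by (simp add: PP_def prodl_def)
lemma PP_append: "PP (ps @ qs) = pmult (PP ps) (PP qs)" by (simp add: PP_def prodl_append)
lemma ZZ_Nil[simp]: "ZZ [] = pone" by (simp add: ZZ_def prodl_def)
lemma ZZ_Cons: "ZZ (a # js) = pmult (zv a) (ZZ js)" by (simp add: ZZ_def prodl_def)
lemma ZZ_append: "ZZ (js @ ks) = pmult (ZZ js) (ZZ ks)" by (simp add: ZZ_def prodl_append)
lemma jord_sym: "jord f g = jord g f" by (simp add: jord_def padd_eq add.commute)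
lemma ZZ_mon: "ZZ js = mon (map Z js)"
  by (induction js) (auto simp: ZZ_Cons zv_def pvar_eq pone_eq pmult_mon)

fun pairs :: "nat list \<Rightarrow> (nat \<times> nat) list" where
  "pairs (a # b # l) = (a,b) # pairs l"
| "pairs _ = []"

definition flat :: "(nat \<times> nat) list \<Rightarrow> nat list" where
  "flat ps = concat (map (\<lambda>(a,b). [a,b]) ps)"

lemma flat_Cons[simp]: "flat ((a,b) # ps) = a # b # flat ps" by (simp add: flat_def)
lemma flat_Nil[simp]: "flat [] = []" by (simp add: flat_def)
lemma flat_append[simp]: "flat (ps @ qs) = flat ps @ flat qs" by (simp add: flat_def)
lemma pairs_flat[simp]: "pairs (flat ps) = ps" by (induction ps) (auto simp: flat_def)
lemma length_flat: "length (flat ps) = 2 * length ps" by (induction ps) (auto simp: flat_def)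
lemma flat_pairs: "even (length l) \<Longrightarrow> flat (pairs l) = l"
  by (induction l rule: pairs.induct) (auto simp: flat_def)
lemma pairs_append: "even (length u) \<Longrightarrow> pairs (u @ w) = pairs u @ pairs w"
  by (induction u rule: pairs.induct) auto

lemma std_product:
  assumes "sorted (flat ps)" "sorted js" "set (flat ps) \<subseteq> {1..n}" "set js \<subseteq> {1..n}"
  shows "pmult (PP ps) (ZZ js) \<in> StdSet n"
  using assms unfolding StdSet_def std_poly_def PP_def ZZ_def flat_def by blast

section \<open>Reduction modulo a T2-ideal containing the generators (4) and (5)\<close>

locale odd_reduction =
  fixes J :: "('k::field) fpoly set"
  assumes T2: "is_T2_ideal J"
    and gen4: "comm (jord (zv 1) (zv 2)) (zv 3) \<in> J"
    and gen5: "psub (pmult (jord (zv 1) (zv 2)) (jord (zv 3) (zv 4)))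
                    (pmult (jord (zv 1) (zv 3)) (jord (zv 2) (zv 4))) \<in> J"
begin

lemma ideal_zero: "0 \<in> J"
  using T2 by (simp add: is_T2_ideal_def is_ideal_def pzero_eq)
lemma ideal_add: "f \<in> J \<Longrightarrow> g \<in> J \<Longrightarrow> f + g \<in> J"
  using T2 by (simp add: is_T2_ideal_def is_ideal_def padd_eq)
lemma ideal_smult: "f \<in> J \<Longrightarrow> smult c f \<in> J"
  using T2 by (simp add: is_T2_ideal_def is_ideal_def)
lemma ideal_mult_left: "f \<in> J \<Longrightarrow> h \<in> FA \<Longrightarrow> pmult h f \<in> J"
  using T2 by (simp add: is_T2_ideal_def is_ideal_def)
lemma ideal_mult_right: "f \<in> J \<Longrightarrow> h \<in> FA \<Longrightarrow> pmult f h \<in> J"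
  using T2 by (simp add: is_T2_ideal_def is_ideal_def)
lemma ideal_subst: "graded_subst \<phi> \<Longrightarrow> f \<in> J \<Longrightarrow> psubst \<phi> f \<in> J"
  using T2 by (simp add: is_T2_ideal_def)
lemma ideal_neg: "f \<in> J \<Longrightarrow> - f \<in> J"
  using ideal_smult[of f "-1"] by (simp add: smult_minus_one)
lemma ideal_diff: "f \<in> J \<Longrightarrow> g \<in> J \<Longrightarrow> f - g \<in> J"
  unfolding diff_conv_add_uminus by (intro ideal_add ideal_neg)

lemma jord_central: "pmult (jord (zv a) (zv b)) (zv c) - pmult (zv c) (jord (zv a) (zv b)) \<in> J"
proof -
  have eq: "psubst (zren ((!) [0, a, b, c])) (comm (jord (zv 1) (zv 2)) (zv 3))
      = (comm (jord (zv a) (zv b)) (zv c) :: 'k fpoly)"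
    by (simp add: psubst_comm psubst_jord psubst_zren_zv)
  have "psubst (zren ((!) [0, a, b, c])) (comm (jord (zv 1) (zv 2)) (zv 3)) \<in> J"
    by (rule ideal_subst[OF graded_zren gen4])
  then have "comm (jord (zv a) (zv b)) (zv c) \<in> J" unfolding eq .
  then show ?thesis unfolding comm_def psub_eq .
qed

lemma jord_commutes_word: "pmult (ZZ u) (jord (zv a) (zv b)) - pmult (jord (zv a) (zv b)) (ZZ u) \<in> J"
proof (induction u)
  case Nil then show ?case by (simp only: ZZ_Nil pmult_one_left pmult_one_right diff_self ideal_zero)
next
  case (Cons c u)
  let ?j = "jord (zv a) (zv b) :: 'k fpoly"
  have "pmult (ZZ (c # u)) ?j - pmult ?j (ZZ (c # u)) =
        pmult (zv c) (pmult (ZZ u) ?j - pmult ?j (ZZ u)) - pmult (pmult ?j (zv c) - pmult (zv c) ?j) (ZZ u)"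
    by (simp add: ZZ_Cons pmult_diff_left pmult_diff_right pmult_assoc)
  also have "\<dots> \<in> J"
    by (intro ideal_diff ideal_mult_left ideal_mult_right Cons.IH jord_central fa_ZZ fa_zv)
  finally show ?case .
qed

lemma jord_exchange:
  "pmult (jord (zv a) (zv b)) (jord (zv c) (zv d)) - pmult (jord (zv a) (zv c)) (jord (zv b) (zv d)) \<in> J"
proof -
  have eq: "psubst (zren ((!) [0, a, b, c, d]))
          (psub (pmult (jord (zv 1) (zv 2)) (jord (zv 3) (zv 4)))
                (pmult (jord (zv 1) (zv 3)) (jord (zv 2) (zv 4))))
      = (pmult (jord (zv a) (zv b)) (jord (zv c) (zv d))
          - pmult (jord (zv a) (zv c)) (jord (zv b) (zv d)) :: 'k fpoly)"
    by (simp add: psub_eq psubst_diff psubst_pmult psubst_jord psubst_zren_zv)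
  have "psubst (zren ((!) [0, a, b, c, d]))
          (psub (pmult (jord (zv 1) (zv 2)) (jord (zv 3) (zv 4)))
                (pmult (jord (zv 1) (zv 3)) (jord (zv 2) (zv 4)))) \<in> J"
    by (rule ideal_subst[OF graded_zren gen5])
  then show ?thesis unfolding eq .
qed

lemma PP_swap:
  assumes "even (length (u @ a # b # v))"
  shows "PP (pairs (u @ a # b # v)) - PP (pairs (u @ b # a # v)) \<in> J"
proof (cases "even (length u)")
  case True
  then have "PP (pairs (u @ a # b # v)) = PP (pairs (u @ b # a # v))"
    by (simp add: pairs_append PP_append PP_Cons jord_sym[of "zv a"])
  then show ?thesis using ideal_zero by (metis diff_self)
next
  case False
  then obtain u' c where u: "u = u' @ [c]" by (cases u rule: rev_cases) auto
  moreover obtain d v' where v: "v = d # v'" using assms False by (cases v) auto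
  moreover have "even (length u')" using False u by simp
  ultimately have "PP (pairs (u @ a # b # v)) - PP (pairs (u @ b # a # v)) =
     pmult (PP (pairs u')) (pmult (pmult (jord (zv c) (zv a)) (jord (zv b) (zv d)) -
        pmult (jord (zv c) (zv b)) (jord (zv a) (zv d))) (PP (pairs v')))"
    by (simp add: pairs_append PP_append PP_Cons pmult_diff_left pmult_diff_right pmult_assoc)
  also have "\<dots> \<in> J" by (intro ideal_mult_left ideal_mult_right jord_exchange fa_PP)
  finally show ?thesis .
qed

lemma PP_sort:
  assumes "even (length l)" shows "PP (pairs l) - PP (pairs (sort l)) \<in> J"
proof (rule sort_by_adjacent_swaps[where R="\<lambda>x y. PP (pairs x) - PP (pairs y) \<in> J"])
  show "PP (pairs x) - PP (pairs x) \<in> J" for x by (simp add: ideal_zero)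
  show "PP (pairs x) - PP (pairs z) \<in> J"
    if "PP (pairs x) - PP (pairs y) \<in> J" "PP (pairs y) - PP (pairs z) \<in> J" for x y z
    using ideal_add[OF that] by simp
  show "PP (pairs (u @ a # b # v)) - PP (pairs (u @ b # a # v)) \<in> J"
    if "mset (u @ a # b # v) = mset l" for u a b v
    by (rule PP_swap) (use assms mset_eq_length[OF that] in simp)
qed

text \<open>The identity \<open>z_a z_b = (z_a o z_b) - z_b z_a\<close> inside a word, with the square moved to
  the front by centrality.\<close>

lemma adjacent_swap:
  "pmult (PP ps) (ZZ (u @ a # b # v))
     - (pmult (PP (ps @ [(a,b)])) (ZZ (u @ v)) - pmult (PP ps) (ZZ (u @ b # a # v))) \<in> J"
proof -
  let ?j = "jord (zv a) (zv b) :: 'k fpoly"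
  have "pmult (PP ps) (ZZ (u @ a # b # v))
          - (pmult (PP (ps @ [(a,b)])) (ZZ (u @ v)) - pmult (PP ps) (ZZ (u @ b # a # v)))
     = pmult (PP ps) (pmult (pmult (ZZ u) ?j - pmult ?j (ZZ u)) (ZZ v))"
    by (simp add: PP_append PP_Cons ZZ_append ZZ_Cons jord_def padd_eq pmult_add_left
        pmult_add_right pmult_diff_left pmult_diff_right pmult_assoc algebra_simps)
  also have "\<dots> \<in> J" by (intro ideal_mult_left ideal_mult_right jord_commutes_word fa_ZZ fa_PP)
  finally show ?thesis .
qed

definition reducible :: "nat \<Rightarrow> 'k fpoly \<Rightarrow> bool" where
  "reducible n p \<longleftrightarrow> (\<exists>g\<in>lin_span (StdSet n). p - g \<in> J)"

lemma reducible_cong: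
  assumes "p - q \<in> J" and "reducible n q" shows "reducible n p"
proof -
  obtain g where "g \<in> lin_span (StdSet n)" "q - g \<in> J"
    using assms(2) by (auto simp: reducible_def)
  moreover have "p - g = (p - q) + (q - g)" by simp
  ultimately show ?thesis using assms(1) ideal_add unfolding reducible_def by metis
qed

lemma reducible_zero: "reducible n 0"
  unfolding reducible_def
proof
  show "0 \<in> lin_span (StdSet n)" by (rule span_zero)
  show "0 - 0 \<in> J" by (simp only: diff_self ideal_zero)
qed

lemma reducible_std:
  assumes "p \<in> StdSet n" shows "reducible n p"
  unfolding reducible_def
proof
  show "p \<in> lin_span (StdSet n)" using assms by (rule span_in)
  show "p - p \<in> J" by (simp only: diff_self ideal_zero)
qed

lemma reducible_add:
  assumes "reducible n p" and "reducible n q" shows "reducible n (p + q)"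
proof -
  obtain g h where "g \<in> lin_span (StdSet n)" "p - g \<in> J" "h \<in> lin_span (StdSet n)" "q - h \<in> J"
    using assms by (auto simp: reducible_def)
  moreover have "(p + q) - (g + h) = (p - g) + (q - h)" by simp
  ultimately show ?thesis unfolding reducible_def by (metis span_add ideal_add)
qed

lemma reducible_smult:
  assumes "reducible n p" shows "reducible n (smult c p)"
proof -
  obtain g where "g \<in> lin_span (StdSet n)" "p - g \<in> J"
    using assms by (auto simp: reducible_def)
  moreover have "smult c p - smult c g = smult c (p - g)" by (simp add: smult_diff_right)
  ultimately show ?thesis unfolding reducible_def by (metis span_smult ideal_smult)
qed

lemma reducible_diff: "reducible n p \<Longrightarrow> reducible n q \<Longrightarrow> reducible n (p - q)"
  using reducible_add[of n p "smult (-1) q"] reducible_smult[of n q "-1"]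
  by (simp add: smult_minus_one)

lemma reducible_lincomb:
  "(\<And>i. i \<in> I \<Longrightarrow> reducible n (F i)) \<Longrightarrow> reducible n (\<Sum>i\<in>I. smult (c i) (F i))"
proof (induction I rule: infinite_finite_induct)
  case (insert i I)
  then show ?case unfolding sum.insert[OF insert.hyps] by (intro reducible_add reducible_smult) auto
qed (simp_all add: reducible_zero)

text \<open>Products with sorted words are reducible: only the squares have to be sorted, by (5).\<close>

lemma reducible_sorted_word:
  assumes "sorted js" "set (flat ps) \<subseteq> {1..n}" "set js \<subseteq> {1..n}"
  shows "reducible n (pmult (PP ps) (ZZ js))"
proof (rule reducible_cong)
  let ?qs = "pairs (sort (flat ps))"
  have ev: "even (length (flat ps))" by (simp add: length_flat)
  then have "flat ?qs = sort (flat ps)" by (intro flat_pairs) simp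
  with assms show "reducible n (pmult (PP ?qs) (ZZ js))" by (intro reducible_std std_product) auto
  have "pmult (PP (pairs (flat ps)) - PP ?qs) (ZZ js) \<in> J"
    by (intro ideal_mult_right PP_sort ev fa_ZZ)
  then show "pmult (PP ps) (ZZ js) - pmult (PP ?qs) (ZZ js) \<in> J"
    by (simp add: pmult_diff_left)
qed

text \<open>General products by induction on the length of the word: each adjacent swap of the
  word costs a product with a word two letters shorter.\<close>

lemma reducible_product:
  "set (flat ps) \<subseteq> {1..n} \<Longrightarrow> set js \<subseteq> {1..n} \<Longrightarrow> reducible n (pmult (PP ps) (ZZ js))"
proof (induction "length js" arbitrary: js ps rule: less_induct)
  case less
  let ?R = "\<lambda>x y. \<forall>qs. set (flat qs) \<subseteq> {1..n} \<longrightarrow>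
      reducible n (pmult (PP qs) (ZZ y)) \<longrightarrow> reducible n (pmult (PP qs) (ZZ x))"
  have "?R js (sort js)"
  proof (rule sort_by_adjacent_swaps[where R="?R"])
    show "?R x x" for x by simp
    show "?R x z" if "?R x y" "?R y z" for x y z using that by blast
    show "?R (u @ a # b # v) (u @ b # a # v)" if perm: "mset (u @ a # b # v) = mset js" for u a b v
    proof (intro allI impI)
      fix qs assume qs: "set (flat qs) \<subseteq> {1..n}"
        and swapped: "reducible n (pmult (PP qs) (ZZ (u @ b # a # v)))"
      have "set (u @ a # b # v) \<subseteq> {1..n}" using less.prems(2) perm by (metis mset_eq_setD)
      moreover have "length (u @ v) < length js" using arg_cong[OF perm, of size] by simp
      ultimately have "reducible n (pmult (PP (qs @ [(a,b)])) (ZZ (u @ v)))"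
        using qs by (intro less.hyps) auto
      then show "reducible n (pmult (PP qs) (ZZ (u @ a # b # v)))"
        by (rule reducible_cong[OF adjacent_swap reducible_diff[OF _ swapped]])
    qed
  qed
  moreover have "reducible n (pmult (PP ps) (ZZ (sort js)))"
    by (rule reducible_sorted_word) (use less.prems in auto)
  ultimately show ?case using less.prems(1) by blast
qed

lemma reducible_odd_poly:
  assumes f: "f \<in> FA" and odd: "\<forall>w. f w \<noteq> 0 \<longrightarrow> set w \<subseteq> Z ` {1..n}"
  shows "reducible n f"
proof -
  have "reducible n (mon w)" if "f w \<noteq> 0" for w
  proof -
    define js where "js = map (\<lambda>v. case v of Z i \<Rightarrow> i | Y i \<Rightarrow> i) w"
    have "set w \<subseteq> Z ` {1..n}" using odd that by blast
    then have "w = map Z js" and "set js \<subseteq> {1..n}" unfolding js_def by (induction w) auto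
    then show ?thesis
      using reducible_product[of "[]" n js] by (simp add: ZZ_mon PP_def prodl_def)
  qed
  then have "reducible n (\<Sum>w\<in>{w. f w \<noteq> 0}. smult (f w) (mon w))"
    by (intro reducible_lincomb) auto
  then show ?thesis using fa_repr[OF f] by simp
qed

end

lemma odd_reduction_Iideal: "odd_reduction (Iideal :: ('k::field) fpoly set)"
proof -
  have gens: "Igens \<subseteq> (FA :: 'k fpoly set)" by (auto simp: Igens_def psub_eq padd_eq comm3_def)
  show ?thesis
  proof
    show "is_T2_ideal (Iideal :: 'k fpoly set)"
      unfolding Iideal_def by (rule T2_gen_T2_ideal(1)[OF gens])
    show "comm (jord (zv 1) (zv 2)) (zv 3) \<in> (Iideal :: 'k fpoly set)"
      "psub (pmult (jord (zv 1) (zv 2)) (jord (zv 3) (zv 4)))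
            (pmult (jord (zv 1) (zv 3)) (jord (zv 2) (zv 4))) \<in> (Iideal :: 'k fpoly set)"
      using T2_gen_T2_ideal(2)[OF gens] unfolding Iideal_def by (auto simp: Igens_def)
  qed
qed

theorem mainTheorem4:
  fixes f :: "('k::field) fpoly" and n :: nat
  assumes "infinite (UNIV :: 'k set)"
    and "(2::'k) \<noteq> 0"
    and "f \<in> FA"
    and "\<forall>w. f w \<noteq> 0 \<longrightarrow> set w \<subseteq> Z ` {1..n}"
  shows "\<exists>g \<in> lin_span (StdSet n). psub f g \<in> Iideal"
proof -
  interpret odd_reduction "Iideal :: 'k fpoly set" by (rule odd_reduction_Iideal)
  have "reducible n f" using assms(3,4) by (rule reducible_odd_poly)
  then show ?thesis by (simp add: reducible_def psub_eq)
qed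

end
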